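(* Let $\Gamma$ be a System F typing context, $t$ a term and $T$ a System F type such that $\Gamma\vdash t:T$ in Curry-style System F, and suppose $\dot t$ is defined. Then $\langle\Gamma\rangle\vdash t\,[T]\,\dot t$ is derivable in RelPf.
   Context: Terms are those of the pure untyped $\lambda$-calculus, up to $\alpha$-equivalence; $=_{\beta\eta}$ is $\beta\eta$-convertibility. Relational types: $R ::= X \mid R\to R' \mid \forall X.R \mid R^{\cup} \mid R\cdot R' \mid t$ (last form: promotion of a term); System F types are those built from type variables, $\to$, $\forall$ only. Curry-style System F: contexts are lists of declarations $x:T$; rules: $\Gamma\vdash x:T$ if $x:T\in\Gamma$; from $\Gamma,x:T\vdash t:T'$ infer $\Gamma\vdash\lambda x.t:T\to T'$; from $\Gamma\vdash t:T'\to T$ and $\Gamma\vdash t':T'$ infer $\Gamma\vdash t\,t':T$; from $\Gamma\vdash t:T$ with $X\notin\mathrm{FV}(\Gamma)$ infer $\Gamma\vdash t:\forall X.T$; from $\Gamma\vdash t:\forall X.T$ infer $\Gamma\vdash t:[T'/X]T$. RelPf: contexts $\Gamma ::= \cdot \mid \Gamma, t\,[R]\,t'$; judgments $\Gamma\vdash t[R]t'$ derived by: (assumption) $\Gamma\vdash t[R]t'$ if $t[R]t'\in\Gamma$; ($\to$I) from $\Gamma, x[R]x'\vdash t[R']t'$ infer $\Gamma\vdash \lambda x.t\,[R\to R']\,\lambda x'.t'$ provided $x,x'\notin\mathrm{FV}(\Gamma,R,R')$; ($\to$E) from $\Gamma\vdash t[R\to R']t'$ and $\Gamma\vdash t_1[R]t_2$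 infer $\Gamma\vdash t\,t_1[R']t'\,t_2$; ($\forall$E) from $\Gamma\vdash t[\forall X.R']t'$ infer $\Gamma\vdash t[[R/X]R']t'$; ($\forall$I) from $\Gamma\vdash t[R]t'$ with $X\notin\mathrm{FV}(\Gamma)$ infer $\Gamma\vdash t[\forall X.R]t'$; (conversion) from $\Gamma\vdash t_1[R]t_2$, $t_1=_{\beta\eta}t_1'$, $t_2=_{\beta\eta}t_2'$ infer $\Gamma\vdash t_1'[R]t_2'$; ($\cup$I) from $\Gamma\vdash t'[R]t$ infer $\Gamma\vdash t[R^\cup]t'$; ($\cup$E) from $\Gamma\vdash t[R^\cup]t'$ infer $\Gamma\vdash t'[R]t$; axiom $\Gamma\vdash t\,[t']\,t'\,t$; from $\Gamma\vdash t[t'']t'$ and $\Gamma\vdash[t'/x]t_1[R][t'/x]t_2$ infer $\Gamma\vdash[t''\,t/x]t_1[R][t''\,t/x]t_2$; from $\Gamma\vdash t[R\cdot R']t'$ and $\Gamma,t[R]x,x[R']t'\vdash t_1[R'']t_2$ with $x\notin\mathrm{FV}(\Gamma,t_1,t_2,t,t',R,R',R'')$ infer $\Gamma\vdash t_1[R'']t_2$; from $\Gamma\vdash t[R]t''$ and $\Gamma\vdash t''[R']t'$ infer $\Gamma\vdash t[R\cdot R']t'$. Fix an injection $x\mapsto\dot x$ partitioning the set of term variables. If $t$ contains no variable of the form $\dot x$ with $x\in\mathrm{FV}(t)$, then $\dot t$ (which is then said to be defined) is $t$ with every variable $x$, free or bound, renamed to $\dot x$. For a System F context, $\langle\cdot\rangle=\cdot$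 and $\langle\Gamma,x:T\rangle=\langle\Gamma\rangle, x\,[T]\,\dot x$. *)

theory Defs
  imports Main
begin

section \<open>Untyped lambda terms, locally nameless (alpha-equivalence = syntactic equality)\<close>

type_synonym var = nat

datatype trm = FV var | BV nat | App trm trm | Lam trm

fun opn :: "nat \<Rightarrow> trm \<Rightarrow> trm \<Rightarrow> trm" where
  "opn k u (FV y) = FV y"
| "opn k u (BV i) = (if i = k then u else BV i)"
| "opn k u (App s r) = App (opn k u s) (opn k u r)"
| "opn k u (Lam b) = Lam (opn (Suc k) u b)"

fun cls :: "nat \<Rightarrow> var \<Rightarrow> trm \<Rightarrow> trm" where
  "cls k x (FV y) = (if y = x then BV k else FV y)"
| "cls k x (BV i) = BV i"
| "cls k x (App s r) = App (cls k x s) (cls k x r)"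
| "cls k x (Lam b) = Lam (cls (Suc k) x b)"

fun lc_at :: "nat \<Rightarrow> trm \<Rightarrow> bool" where
  "lc_at k (FV y) = True"
| "lc_at k (BV i) = (i < k)"
| "lc_at k (App s r) = (lc_at k s \<and> lc_at k r)"
| "lc_at k (Lam b) = lc_at (Suc k) b"

abbreviation lc :: "trm \<Rightarrow> bool" where "lc t \<equiv> lc_at 0 t"

fun fv :: "trm \<Rightarrow> var set" where
  "fv (FV y) = {y}"
| "fv (BV i) = {}"
| "fv (App s r) = fv s \<union> fv r"
| "fv (Lam b) = fv b"

definition lam :: "var \<Rightarrow> trm \<Rightarrow> trm" where
  "lam x t = Lam (cls 0 x t)"

fun subst :: "var \<Rightarrow> trm \<Rightarrow> trm \<Rightarrow> trm" where
  "subst x u (FV y) = (if y = x then u else FV y)"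
| "subst x u (BV i) = BV i"
| "subst x u (App s r) = App (subst x u s) (subst x u r)"
| "subst x u (Lam b) = Lam (subst x u b)"

inductive bstep :: "trm \<Rightarrow> trm \<Rightarrow> bool" where
  beta: "lc (Lam b) \<Longrightarrow> lc u \<Longrightarrow> bstep (App (Lam b) u) (opn 0 u b)"
| eta: "lc t \<Longrightarrow> bstep (Lam (App t (BV 0))) t"
| appL: "bstep s s' \<Longrightarrow> lc r \<Longrightarrow> bstep (App s r) (App s' r)"
| appR: "bstep r r' \<Longrightarrow> lc s \<Longrightarrow> bstep (App s r) (App s r')"
| lamC: "bstep s s' \<Longrightarrow> bstep (lam x s) (lam x s')"

definition beq :: "trm \<Rightarrow> trm \<Rightarrow> bool" where
  "beq = equivclp bstep"

datatype rty = TFV var | TBV nat | Arr rty rty | All rty | Cnv rty | Cmp rty rty | Prom trm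

fun topen :: "nat \<Rightarrow> rty \<Rightarrow> rty \<Rightarrow> rty" where
  "topen k U (TFV Y) = TFV Y"
| "topen k U (TBV i) = (if i = k then U else TBV i)"
| "topen k U (Arr A B) = Arr (topen k U A) (topen k U B)"
| "topen k U (All B) = All (topen (Suc k) U B)"
| "topen k U (Cnv A) = Cnv (topen k U A)"
| "topen k U (Cmp A B) = Cmp (topen k U A) (topen k U B)"
| "topen k U (Prom t) = Prom t"

fun tclose :: "nat \<Rightarrow> var \<Rightarrow> rty \<Rightarrow> rty" where
  "tclose k X (TFV Y) = (if Y = X then TBV k else TFV Y)"
| "tclose k X (TBV i) = TBV i"
| "tclose k X (Arr A B) = Arr (tclose k X A) (tclose k X B)"
| "tclose k X (All B) = All (tclose (Suc k) X B)"
| "tclose k X (Cnv A) = Cnv (tclose k X A)"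
| "tclose k X (Cmp A B) = Cmp (tclose k X A) (tclose k X B)"
| "tclose k X (Prom t) = Prom t"

fun tlc_at :: "nat \<Rightarrow> rty \<Rightarrow> bool" where
  "tlc_at k (TFV Y) = True"
| "tlc_at k (TBV i) = (i < k)"
| "tlc_at k (Arr A B) = (tlc_at k A \<and> tlc_at k B)"
| "tlc_at k (All B) = tlc_at (Suc k) B"
| "tlc_at k (Cnv A) = tlc_at k A"
| "tlc_at k (Cmp A B) = (tlc_at k A \<and> tlc_at k B)"
| "tlc_at k (Prom t) = lc t"

abbreviation tlc :: "rty \<Rightarrow> bool" where "tlc R \<equiv> tlc_at 0 R"

definition Forall :: "var \<Rightarrow> rty \<Rightarrow> rty" where
  "Forall X R = All (tclose 0 X R)"

fun ftv :: "rty \<Rightarrow> var set" where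
  "ftv (TFV Y) = {Y}"
| "ftv (TBV i) = {}"
| "ftv (Arr A B) = ftv A \<union> ftv B"
| "ftv (All B) = ftv B"
| "ftv (Cnv A) = ftv A"
| "ftv (Cmp A B) = ftv A \<union> ftv B"
| "ftv (Prom t) = {}"

fun fvty :: "rty \<Rightarrow> var set" where
  "fvty (TFV Y) = {}"
| "fvty (TBV i) = {}"
| "fvty (Arr A B) = fvty A \<union> fvty B"
| "fvty (All B) = fvty B"
| "fvty (Cnv A) = fvty A"
| "fvty (Cmp A B) = fvty A \<union> fvty B"
| "fvty (Prom t) = fv t"

fun sysF_shape :: "rty \<Rightarrow> bool" where
  "sysF_shape (TFV Y) = True"
| "sysF_shape (TBV i) = True"
| "sysF_shape (Arr A B) = (sysF_shape A \<and> sysF_shape B)"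
| "sysF_shape (All B) = sysF_shape B"
| "sysF_shape (Cnv A) = False"
| "sysF_shape (Cmp A B) = False"
| "sysF_shape (Prom t) = False"

definition sysF :: "rty \<Rightarrow> bool" where
  "sysF T \<longleftrightarrow> sysF_shape T \<and> tlc T"

type_synonym fctx = "(var \<times> rty) list"

definition ftv_fctx :: "fctx \<Rightarrow> var set" where
  "ftv_fctx \<Gamma> = (\<Union>(x, T) \<in> set \<Gamma>. ftv T)"

inductive typing :: "fctx \<Rightarrow> trm \<Rightarrow> rty \<Rightarrow> bool" where
  t_var: "(x, T) \<in> set \<Gamma> \<Longrightarrow> typing \<Gamma> (FV x) T"
| t_abs: "x \<notin> fst ` set \<Gamma> \<Longrightarrow> sysF T \<Longrightarrow> typing (\<Gamma> @ [(x, T)]) t T'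
          \<Longrightarrow> typing \<Gamma> (lam x t) (Arr T T')"
| t_app: "typing \<Gamma> t (Arr T' T) \<Longrightarrow> typing \<Gamma> t' T' \<Longrightarrow> typing \<Gamma> (App t t') T"
| t_gen: "typing \<Gamma> t T \<Longrightarrow> X \<notin> ftv_fctx \<Gamma> \<Longrightarrow> typing \<Gamma> t (Forall X T)"
| t_inst: "typing \<Gamma> t (All B) \<Longrightarrow> sysF T' \<Longrightarrow> typing \<Gamma> t (topen 0 T' B)"

type_synonym rctx = "(trm \<times> rty \<times> trm) list"

definition fv_rctx :: "rctx \<Rightarrow> var set" where
  "fv_rctx \<Gamma> = (\<Union>(t, R, t') \<in> set \<Gamma>. fv t \<union> fvty R \<union> fv t')"

definition ftv_rctx :: "rctx \<Rightarrow> var set" where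
  "ftv_rctx \<Gamma> = (\<Union>(t, R, t') \<in> set \<Gamma>. ftv R)"

inductive relpf :: "rctx \<Rightarrow> trm \<Rightarrow> rty \<Rightarrow> trm \<Rightarrow> bool" where
  r_assm: "(t, R, t') \<in> set \<Gamma> \<Longrightarrow> relpf \<Gamma> t R t'"
| r_arrI: "relpf (\<Gamma> @ [(FV x, R, FV x')]) t R' t'
           \<Longrightarrow> x \<notin> fv_rctx \<Gamma> \<union> fvty R \<union> fvty R'
           \<Longrightarrow> x' \<notin> fv_rctx \<Gamma> \<union> fvty R \<union> fvty R'
           \<Longrightarrow> relpf \<Gamma> (lam x t) (Arr R R') (lam x' t')"
| r_arrE: "relpf \<Gamma> t (Arr R R') t' \<Longrightarrow> relpf \<Gamma> t1 R t2
           \<Longrightarrow> relpf \<Gamma> (App t t1) R' (App t' t2)"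
| r_allE: "relpf \<Gamma> t (All B) t' \<Longrightarrow> tlc R \<Longrightarrow> relpf \<Gamma> t (topen 0 R B) t'"
| r_allI: "relpf \<Gamma> t R t' \<Longrightarrow> X \<notin> ftv_rctx \<Gamma> \<Longrightarrow> relpf \<Gamma> t (Forall X R) t'"
| r_conv: "relpf \<Gamma> t1 R t2 \<Longrightarrow> beq t1 t1' \<Longrightarrow> beq t2 t2' \<Longrightarrow> relpf \<Gamma> t1' R t2'"
| r_cnvI: "relpf \<Gamma> t' R t \<Longrightarrow> relpf \<Gamma> t (Cnv R) t'"
| r_cnvE: "relpf \<Gamma> t (Cnv R) t' \<Longrightarrow> relpf \<Gamma> t' R t"
| r_prom: "lc t \<Longrightarrow> lc t' \<Longrightarrow> relpf \<Gamma> t (Prom t') (App t' t)"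
| r_subst: "relpf \<Gamma> t (Prom t'') t' \<Longrightarrow> relpf \<Gamma> (subst x t' t1) R (subst x t' t2)
            \<Longrightarrow> relpf \<Gamma> (subst x (App t'' t) t1) R (subst x (App t'' t) t2)"
| r_cmpE: "relpf \<Gamma> t (Cmp R R') t'
           \<Longrightarrow> relpf (\<Gamma> @ [(t, R, FV x), (FV x, R', t')]) t1 R'' t2
           \<Longrightarrow> x \<notin> fv_rctx \<Gamma> \<union> fv t1 \<union> fv t2 \<union> fv t \<union> fv t'
                    \<union> fvty R \<union> fvty R' \<union> fvty R''
           \<Longrightarrow> relpf \<Gamma> t1 R'' t2"
| r_cmpI: "relpf \<Gamma> t R t'' \<Longrightarrow> relpf \<Gamma> t'' R' t' \<Longrightarrow> relpf \<Gamma> t (Cmp R R') t'"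

fun dot_trm :: "(var \<Rightarrow> var) \<Rightarrow> trm \<Rightarrow> trm" where
  "dot_trm d (FV y) = FV (d y)"
| "dot_trm d (BV i) = BV i"
| "dot_trm d (App s r) = App (dot_trm d s) (dot_trm d r)"
| "dot_trm d (Lam b) = Lam (dot_trm d b)"

definition dot_defined :: "(var \<Rightarrow> var) \<Rightarrow> trm \<Rightarrow> bool" where
  "dot_defined d t \<longleftrightarrow> (\<forall>x \<in> fv t. d x \<notin> fv t)"

definition ctx_tr :: "(var \<Rightarrow> var) \<Rightarrow> fctx \<Rightarrow> rctx" where
  "ctx_tr d \<Gamma> = map (\<lambda>(x, T). (FV x, T, FV (d x))) \<Gamma>"

end

theory Submission
  imports Defs
begin

text \<open>Each Curry-style System F rule is mirrored by the RelPf rule of the same shape: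
  variables by assumptions, abstraction by \<open>\<rightarrow>\<close>I, application by \<open>\<rightarrow>\<close>E, generalisation
  by \<open>\<forall>\<close>I and instantiation by \<open>\<forall>\<close>E. Since \<open>\<rightarrow>\<close>I needs fresh variables on both sides,
  the induction on the typing derivation is carried out for two arbitrary renamings of
  the free variables, one for each side of the relation; the theorem is the instance
  with the identity on the left and the dotting map on the right.\<close>

lemma finite_fv: "finite (fv t)"
  by (induction t) auto

lemma finite_fvty: "finite (fvty R)"
  by (induction R) (auto simp: finite_fv)

lemma finite_fv_rctx: "finite (fv_rctx \<Delta>)"
  unfolding fv_rctx_def by (auto simp: finite_fv finite_fvty)

lemma ftv_rctx_snoc: "ftv_rctx (\<Delta> @ [(a, T, b)]) = ftv_rctx \<Delta> \<union> ftv T"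
  unfolding ftv_rctx_def by auto

lemma ftv_fctx_snoc: "ftv_fctx (\<Gamma> @ [(x, T)]) = ftv_fctx \<Gamma> \<union> ftv T"
  unfolding ftv_fctx_def by auto

lemma dot_trm_id: "dot_trm id t = t"
  by (induction t) auto

lemma dot_trm_cls:
  "z \<notin> \<rho> ` (fv t - {x}) \<Longrightarrow> dot_trm \<rho> (cls k x t) = cls k z (dot_trm (\<rho>(x := z)) t)"
  by (induction t arbitrary: k) auto

lemma dot_trm_lam:
  "z \<notin> \<rho> ` (fv t - {x}) \<Longrightarrow> dot_trm \<rho> (lam x t) = lam z (dot_trm (\<rho>(x := z)) t)"
  by (simp add: lam_def dot_trm_cls)

lemma dot_trm_lam_fresh:
  assumes "finite S"
  obtains z where "z \<notin> S" and "dot_trm \<rho> (lam x t) = lam z (dot_trm (\<rho>(x := z)) t)"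
proof -
  have "finite (S \<union> \<rho> ` (fv t - {x}))"
    using assms by (simp add: finite_fv)
  then obtain z where "z \<notin> S \<union> \<rho> ` (fv t - {x})"
    using ex_new_if_finite[OF infinite_UNIV_nat] by blast
  with dot_trm_lam that show ?thesis by blast
qed

definition decls_renamed_in :: "(var \<Rightarrow> var) \<Rightarrow> (var \<Rightarrow> var) \<Rightarrow> fctx \<Rightarrow> rctx \<Rightarrow> bool" where
  "decls_renamed_in \<rho> \<sigma> \<Gamma> \<Delta> \<longleftrightarrow> (\<forall>(x, U) \<in> set \<Gamma>. (FV (\<rho> x), U, FV (\<sigma> x)) \<in> set \<Delta>)"

lemma decls_renamed_in_snoc:
  assumes "decls_renamed_in \<rho> \<sigma> \<Gamma> \<Delta>" and "x \<notin> fst ` set \<Gamma>"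
  shows "decls_renamed_in (\<rho>(x := z)) (\<sigma>(x := z')) (\<Gamma> @ [(x, T)]) (\<Delta> @ [(FV z, T, FV z')])"
  unfolding decls_renamed_in_def
proof clarify
  fix y U assume "(y, U) \<in> set (\<Gamma> @ [(x, T)])"
  then consider "(y, U) \<in> set \<Gamma>" "y \<noteq> x" | "y = x" "U = T"
    using assms(2) by force
  then show "(FV ((\<rho>(x := z)) y), U, FV ((\<sigma>(x := z')) y)) \<in> set (\<Delta> @ [(FV z, T, FV z')])"
    by cases (use assms(1) in \<open>auto simp: decls_renamed_in_def\<close>)
qed

lemma relpf_renamings_of_typing:
  assumes "typing \<Gamma> t T"
    and "decls_renamed_in \<rho> \<sigma> \<Gamma> \<Delta>"
    and "ftv_rctx \<Delta> \<subseteq> ftv_fctx \<Gamma>"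
  shows "relpf \<Delta> (dot_trm \<rho> t) T (dot_trm \<sigma> t)"
  using assms
proof (induction arbitrary: \<rho> \<sigma> \<Delta> rule: typing.induct)
  case (t_var x T \<Gamma>)
  then show ?case
    by (auto simp: decls_renamed_in_def intro: relpf.r_assm)
next
  case (t_abs x \<Gamma> T t T')
  let ?used = "fv_rctx \<Delta> \<union> fvty T \<union> fvty T'"
  have "finite ?used"
    by (simp add: finite_fv_rctx finite_fvty)
  then obtain z z' where
        z: "z \<notin> ?used" "dot_trm \<rho> (lam x t) = lam z (dot_trm (\<rho>(x := z)) t)"
    and z': "z' \<notin> ?used" "dot_trm \<sigma> (lam x t) = lam z' (dot_trm (\<sigma>(x := z')) t)"
    by (metis dot_trm_lam_fresh)
  have "relpf (\<Delta> @ [(FV z, T, FV z')]) (dot_trm (\<rho>(x := z)) t) T' (dot_trm (\<sigma>(x := z')) t)"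
  proof (rule t_abs.IH)
    show "decls_renamed_in (\<rho>(x := z)) (\<sigma>(x := z')) (\<Gamma> @ [(x, T)]) (\<Delta> @ [(FV z, T, FV z')])"
      using t_abs.prems(1) t_abs.hyps(1) by (rule decls_renamed_in_snoc)
    show "ftv_rctx (\<Delta> @ [(FV z, T, FV z')]) \<subseteq> ftv_fctx (\<Gamma> @ [(x, T)])"
      using t_abs.prems(2) by (auto simp: ftv_rctx_snoc ftv_fctx_snoc)
  qed
  then have "relpf \<Delta> (lam z (dot_trm (\<rho>(x := z)) t)) (Arr T T') (lam z' (dot_trm (\<sigma>(x := z')) t))"
    using z(1) z'(1) by (rule relpf.r_arrI)
  with z(2) z'(2) show ?case
    by simp
next
  case (t_app \<Gamma> t T' T t')
  then have "relpf \<Delta> (App (dot_trm \<rho> t) (dot_trm \<rho> t')) T (App (dot_trm \<sigma> t) (dot_trm \<sigma> t'))"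
    by (blast intro: relpf.r_arrE)
  then show ?case
    by simp
next
  case (t_gen \<Gamma> t T X)
  then have "X \<notin> ftv_rctx \<Delta>"
    by blast
  with t_gen show ?case
    by (auto intro: relpf.r_allI)
next
  case (t_inst \<Gamma> t B T')
  then show ?case
    by (auto simp: sysF_def intro: relpf.r_allE)
qed

text \<open>In the locally nameless encoding bound variables carry no names.\<close>

theorem mainTheorem6:
  fixes dot :: "var \<Rightarrow> var" and \<Gamma> :: fctx and t :: trm and T :: rty
  assumes "inj dot"
    and "\<forall>(x, T') \<in> set \<Gamma>. sysF T'"
    and "sysF T"
    and "typing \<Gamma> t T"
    and "dot_defined dot t"
  shows "relpf (ctx_tr dot \<Gamma>) t T (dot_trm dot t)"
proof -
  have "decls_renamed_in id dot \<Gamma> (ctx_tr dot \<Gamma>)"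
    by (auto simp: decls_renamed_in_def ctx_tr_def)
  moreover have "ftv_rctx (ctx_tr dot \<Gamma>) \<subseteq> ftv_fctx \<Gamma>"
    by (auto simp: ctx_tr_def ftv_rctx_def ftv_fctx_def)
  ultimately have "relpf (ctx_tr dot \<Gamma>) (dot_trm id t) T (dot_trm dot t)"
    by (rule relpf_renamings_of_typing[OF assms(4)])
  then show ?thesis
    by (simp add: dot_trm_id)
qed

end
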